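(* Let $T:[0,1]\to\mathbb{R}$ be Takagi's function, $T(x)=\sum_{n=1}^\infty 2^{-n}\phi^{(n)}(x)$, where $\phi(x)=2x$ for $0\le x\le 1/2$, $\phi(x)=2-2x$ for $1/2\le x\le 1$, and $\phi^{(n)}$ denotes the $n$-fold composition of $\phi$. Let $x\in(0,1)$ be non-dyadic (i.e. not of the form $k/2^m$ with integers $k,m$), and write $$x=\sum_{n=1}^\infty 2^{-a_n},\qquad 1-x=\sum_{n=1}^\infty 2^{-b_n},$$ where $\{a_n\}$ and $\{b_n\}$ are strictly increasing sequences of positive integers (uniquely determined by $x$). Then: (i) $T'_+(x)=+\infty$ if and only if $a_n-2n\to\infty$; (ii) $T'_-(x)=+\infty$ if and only if $a_{n+1}-2a_n+2n-\log_2(a_{n+1}-a_n)\to-\infty$ as $n\to\infty$; (iii) $T'_+(x)=-\infty$ if and only if $b_{n+1}-2b_n+2n-\log_2(b_{n+1}-b_n)\to-\infty$ as $n\to\infty$; (iv) $T'_-(x)=-\infty$ if and only if $b_n-2n\to\infty$.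
   Context: $T'_+(x):=\lim_{h\downarrow 0}\frac{T(x+h)-T(x)}{h}$ and $T'_-(x):=\lim_{h\uparrow 0}\frac{T(x+h)-T(x)}{h}$, whenever these limits exist as extended real numbers. Thus $a_n$ are the positions of the ones and $b_n$ the positions of the zeros in the binary expansion of $x$. *)

theory Defs
  imports "HOL-Analysis.Analysis"
begin

definition tent :: "real \<Rightarrow> real" where
  "tent x = (if x \<le> 1/2 then 2 * x else 2 - 2 * x)"

definition takagi :: "real \<Rightarrow> real" where
  "takagi x = (\<Sum>n. (1/2) ^ (Suc n) * (tent ^^ (Suc n)) x)"

definition dyadic :: "real \<Rightarrow> bool" where
  "dyadic x \<longleftrightarrow> (\<exists>(k::int) (m::nat). x = of_int k / 2 ^ m)"

end

theory Submission
  imports Defs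
begin

text \<open>On a dyadic interval \<open>[k/2^m, (k+1)/2^m]\<close>, \<open>takagi\<close> is an affine function plus a copy of
  \<open>takagi\<close> scaled by \<open>2^-m\<close>; the slope of the affine part is the number of zeros minus the
  number of ones among the first \<open>m\<close> binary digits of \<open>k/2^m\<close>. For the intervals containing
  \<open>x\<close>, this slope at level \<open>j\<close> is \<open>j - 2n\<close> when \<open>a n \<le> j < a (n+1)\<close>.

  To the right of \<open>x\<close>, difference quotients are bounded above by the slopes at the right end
  points of these intervals and below by the slopes at levels where \<open>x\<close> has a digit 0, up to
  a bounded error; so \<open>T'_+(x) = +\<infinity>\<close> iff the slopes tend to \<open>+\<infinity>\<close>, i.e. iff
  \<open>a n - 2n \<rightarrow> \<infinity>\<close>. To the left of \<open>x\<close>, for \<open>y\<close> between consecutive partial sums of the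
  expansion, the quotient is the slope at level \<open>a (m+1)\<close> plus a correction depending only on
  the behaviour of \<open>takagi\<close> near 0 at the scale of the gap \<open>d = a (m+2) - a (m+1)\<close>; this
  correction is at least \<open>-(d - log 2 d) - 1\<close> and attains \<open>-(d - log 2 d) + O(1)\<close>, which gives
  (ii). Since \<open>takagi (1 - y) = takagi y\<close>, reflecting \<open>x\<close> to \<open>1 - x\<close> turns \<open>T'_\<plusminus>\<close> into
  \<open>-T'_\<mp>\<close> and \<open>a\<close> into \<open>b\<close>, which gives (iii) and (iv).\<close>

section \<open>The functional equation of the Takagi function\<close>

lemma tent_in_unit: "0 \<le> y \<Longrightarrow> y \<le> 1 \<Longrightarrow> 0 \<le> tent y \<and> tent y \<le> 1"
  by (auto simp: tent_def)

lemma funpow_tent_in_unit: "0 \<le> y \<Longrightarrow> y \<le> 1 \<Longrightarrow> 0 \<le> (tent ^^ n) y \<and> (tent ^^ n) y \<le> 1"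
  by (induction n) (auto simp: tent_in_unit)

lemma summable_takagi:
  assumes "0 \<le> y" "y \<le> 1"
  shows "summable (\<lambda>n. (1/2) ^ Suc n * (tent ^^ Suc n) y)"
proof (rule summable_comparison_test)
  show "\<exists>N. \<forall>n\<ge>N. norm ((1/2) ^ Suc n * (tent ^^ Suc n) y) \<le> (1/2::real) ^ Suc n"
    using funpow_tent_in_unit[OF assms, of "Suc _"]
    by (auto intro!: mult_left_le_one_le simp: abs_mult simp del: funpow.simps)
  show "summable (\<lambda>n. (1/2::real) ^ Suc n)"
    by (simp add: summable_geometric)
qed

lemma takagi_functional_eq:
  assumes "0 \<le> y" "y \<le> 1"
  shows "takagi y = tent y / 2 + takagi (tent y) / 2"
proof -
  have summ: "summable (\<lambda>n. (1/2) ^ Suc n * (tent ^^ Suc n) y)"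
    by (rule summable_takagi[OF assms])
  have "takagi y = (\<Sum>n. (1/2) ^ Suc (Suc n) * (tent ^^ Suc (Suc n)) y) + tent y / 2"
    unfolding takagi_def using suminf_split_head[OF summ] by (simp add: suminf_split_head[OF summ])
  also have "(\<Sum>n. (1/2) ^ Suc (Suc n) * (tent ^^ Suc (Suc n)) y)
      = (\<Sum>n. 1/2 * ((1/2) ^ Suc n * (tent ^^ Suc n) (tent y)))"
    by (simp add: funpow_Suc_right del: funpow.simps)
  also have "\<dots> = takagi (tent y) / 2"
    unfolding takagi_def using summable_takagi tent_in_unit[OF assms]
    by (subst suminf_mult) auto
  finally show ?thesis by simp
qed

lemma takagi_nonneg: "0 \<le> y \<Longrightarrow> y \<le> 1 \<Longrightarrow> 0 \<le> takagi y"
  unfolding takagi_def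
  by (rule suminf_nonneg[OF summable_takagi])
    (auto simp: funpow_tent_in_unit simp del: funpow.simps)

lemma takagi_le_1:
  assumes "0 \<le> y" "y \<le> 1"
  shows "takagi y \<le> 1"
proof -
  have "takagi y \<le> (\<Sum>n. (1/2::real) ^ Suc n)"
    unfolding takagi_def
    by (rule suminf_le[OF _ summable_takagi[OF assms]])
      (auto intro!: mult_left_le_one_le simp: funpow_tent_in_unit[OF assms] summable_geometric
        simp del: funpow.simps)
  also have "(\<Sum>n. (1/2::real) ^ Suc n) = 1"
    using suminf_geometric[of "1/2::real"] suminf_mult[of "\<lambda>n. (1/2::real)^n" "1/2"]
    by (simp add: summable_geometric)
  finally show ?thesis .
qed

lemma takagi_reflect:
  assumes "0 \<le> y" "y \<le> 1"
  shows "takagi (1 - y) = takagi y"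
proof -
  have "tent (1 - y) = tent y" by (auto simp: tent_def)
  then show ?thesis
    using takagi_functional_eq[of y] takagi_functional_eq[of "1 - y"] assms by simp
qed

lemma takagi_0 [simp]: "takagi 0 = 0"
proof -
  have "(tent ^^ n) 0 = 0" for n by (induction n) (auto simp: tent_def)
  then show ?thesis by (simp add: takagi_def del: funpow.simps)
qed

lemma takagi_1 [simp]: "takagi 1 = 0"
  using takagi_reflect[of 0] by simp

lemma takagi_half: "takagi (1/2) = 1/2"
  using takagi_functional_eq[of "1/2"] by (simp add: tent_def)

lemma takagi_lower_half: "0 \<le> z \<Longrightarrow> z \<le> 1/2 \<Longrightarrow> takagi z = z + takagi (2*z) / 2"
  using takagi_functional_eq[of z] by (simp add: tent_def)

lemma takagi_upper_half:
  assumes "1/2 \<le> z" "z \<le> 1"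
  shows "takagi z = 1 - z + takagi (2*z - 1) / 2"
proof (cases "z = 1/2")
  case True
  then show ?thesis using takagi_half by (simp add: True)
next
  case False
  then have "takagi z = 1 - z + takagi (2 - 2*z) / 2"
    using takagi_functional_eq[of z] assms by (auto simp: tent_def)
  also have "takagi (2 - 2*z) = takagi (2*z - 1)"
    using takagi_reflect[of "2*z - 1"] assms by simp
  finally show ?thesis .
qed

section \<open>Self-similarity on dyadic intervals\<close>

lemma takagi_affine_on_dyadic_interval:
  assumes "k < 2^m"
  shows "\<exists>\<alpha> \<beta>. \<forall>y. real k / 2^m \<le> y \<longrightarrow> y \<le> (real k + 1) / 2^m \<longrightarrow>
           takagi y = \<alpha> + \<beta> * y + takagi (2^m * y - k) / 2^m"
  using assms
proof (induction m arbitrary: k)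
  case 0
  then show ?case by (auto intro!: exI[of _ 0])
next
  case (Suc m)
  define k' where "k' = k div 2"
  have "k' < 2^m"
    using Suc.prems by (simp add: k'_def less_mult_imp_div_less)
  then obtain \<alpha> \<beta> where IH: "\<And>y. real k' / 2^m \<le> y \<Longrightarrow> y \<le> (real k' + 1) / 2^m \<Longrightarrow>
      takagi y = \<alpha> + \<beta> * y + takagi (2^m * y - k') / 2^m"
    using Suc.IH by blast
  have pos: "(0::real) < 2^m" by simp
  show ?case
  proof (cases "even k")
    case True
    then have "k = 2 * k'" by (simp add: k'_def)
    then have k: "real k = 2 * real k'" by simp
    show ?thesis
    proof (intro exI allI impI)
      fix y assume y: "real k / 2^Suc m \<le> y" "y \<le> (real k + 1) / 2^Suc m"
      define z where "z = 2^m * y - k'"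
      have z: "0 \<le> z" "z \<le> 1/2" and y': "real k' / 2^m \<le> y" "y \<le> (real k' + 1) / 2^m"
        using y pos unfolding z_def k by (auto simp: field_simps)
      have "takagi y = \<alpha> + \<beta> * y + (z + takagi (2*z) / 2) / 2^m"
        using IH[OF y'] takagi_lower_half[OF z] by (simp add: z_def)
      also have "2*z = 2^Suc m * y - k" by (simp add: z_def k)
      finally show "takagi y = (\<alpha> - k' / 2^m) + (\<beta> + 1) * y + takagi (2^Suc m * y - k) / 2^Suc m"
        using pos by (simp add: z_def field_simps)
    qed
  next
    case False
    then have "k = 2 * k' + 1" by (simp add: k'_def)
    then have k: "real k = 2 * real k' + 1" by simp
    show ?thesis
    proof (intro exI allI impI)
      fix y assume y: "real k / 2^Suc m \<le> y" "y \<le> (real k + 1) / 2^Suc m"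
      define z where "z = 2^m * y - k'"
      have z: "1/2 \<le> z" "z \<le> 1" and y': "real k' / 2^m \<le> y" "y \<le> (real k' + 1) / 2^m"
        using y pos unfolding z_def k by (auto simp: field_simps)
      have "takagi y = \<alpha> + \<beta> * y + (1 - z + takagi (2*z - 1) / 2) / 2^m"
        using IH[OF y'] takagi_upper_half[OF z] by (simp add: z_def)
      also have "2*z - 1 = 2^Suc m * y - k" by (simp add: z_def k)
      finally show "takagi y = (\<alpha> + (1 + k') / 2^m) + (\<beta> - 1) * y
          + takagi (2^Suc m * y - k) / 2^Suc m"
        using pos by (simp add: z_def field_simps)
    qed
  qed
qed

definition dyadic_slope :: "nat \<Rightarrow> nat \<Rightarrow> real" where
  "dyadic_slope m k = 2^m * (takagi ((real k + 1) / 2^m) - takagi (real k / 2^m))"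

lemma takagi_dyadic_selfsimilar:
  assumes "k < 2^m" "real k / 2^m \<le> y" "y \<le> (real k + 1) / 2^m"
  shows "takagi y = takagi (real k / 2^m) + dyadic_slope m k * (y - real k / 2^m)
           + takagi (2^m * y - k) / 2^m"
proof -
  obtain \<alpha> \<beta> where affine: "\<And>y. real k / 2^m \<le> y \<Longrightarrow> y \<le> (real k + 1) / 2^m \<Longrightarrow>
      takagi y = \<alpha> + \<beta> * y + takagi (2^m * y - k) / 2^m"
    using takagi_affine_on_dyadic_interval[OF assms(1)] by blast
  have pos: "(0::real) < 2^m" by simp
  then have le: "real k / 2^m \<le> (real k + 1) / 2^m"
    by (simp add: divide_right_mono)
  have left: "takagi (real k / 2^m) = \<alpha> + \<beta> * (real k / 2^m)"
    using affine[of "real k / 2^m"] le by simp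
  have right: "takagi ((real k + 1) / 2^m) = \<alpha> + \<beta> * ((real k + 1) / 2^m)"
    using affine[of "(real k + 1) / 2^m"] le by simp
  have "dyadic_slope m k = \<beta>"
    unfolding dyadic_slope_def left right using pos by (simp add: field_simps)
  then show ?thesis
    using affine[OF assms(2,3)] left by (simp add: right_diff_distrib)
qed

text \<open>At the midpoint of a dyadic interval of level \<open>m\<close>, \<open>takagi\<close> exceeds the chord by
  \<open>takagi (1/2) / 2^m = 2^-(m+1)\<close>.\<close>

lemma dyadic_slope_children:
  assumes "k < 2^m"
  shows "dyadic_slope (Suc m) (2*k) = dyadic_slope m k + 1"
    and "dyadic_slope (Suc m) (2*k + 1) = dyadic_slope m k - 1"
proof -
  define c :: real where "c = 2^m"
  have c: "0 < c" "(2::real)^Suc m = 2*c" "(2::real)^m = c" by (simp_all add: c_def)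
  define mid where "mid = (2 * real k + 1) / (2*c)"
  have mid: "real k / c \<le> mid" "mid \<le> (real k + 1) / c" "c * mid - k = 1/2"
    using c(1) by (simp_all add: mid_def field_simps)
  have takagi_mid: "takagi mid = takagi (real k / c) + dyadic_slope m k / (2*c) + 1 / (2*c)"
    using takagi_dyadic_selfsimilar[OF assms, of mid] mid takagi_half c(1)
    unfolding c by (simp add: mid_def field_simps)
  have takagi_right: "takagi ((real k + 1) / c) = takagi (real k / c) + dyadic_slope m k / c"
    using c by (simp add: dyadic_slope_def)
  have ends: "real (2*k) / (2*c) = real k / c" "(real (2*k) + 1) / (2*c) = mid"
    "real (2*k + 1) / (2*c) = mid" "(real (2*k + 1) + 1) / (2*c) = (real k + 1) / c"
    using c(1) by (simp_all add: mid_def field_simps)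
  show "dyadic_slope (Suc m) (2*k) = dyadic_slope m k + 1"
    unfolding dyadic_slope_def[of "Suc m"] c(2) ends takagi_mid using c(1)
    by (simp add: field_simps)
  show "dyadic_slope (Suc m) (2*k + 1) = dyadic_slope m k - 1"
    unfolding dyadic_slope_def[of "Suc m"] c(2) ends takagi_mid takagi_right using c(1)
    by (simp add: field_simps)
qed

section \<open>The Takagi function near 0\<close>

lemma takagi_near_0: "0 \<le> t \<Longrightarrow> t \<le> (1/2)^k \<Longrightarrow> takagi t = k * t + takagi (2^k * t) / 2^k"
proof (induction k arbitrary: t)
  case 0
  then show ?case by simp
next
  case (Suc k)
  have "(1/2::real)^Suc k \<le> 1/2" by (simp add: power_le_one)
  then have "takagi t = t + takagi (2*t) / 2"
    using takagi_lower_half Suc.prems by simp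
  also have "takagi (2*t) = k * (2*t) + takagi (2^k * (2*t)) / 2^k"
    using Suc.IH[of "2*t"] Suc.prems by simp
  finally show ?case by (simp add: algebra_simps)
qed

lemma takagi_near_0_bounds:
  assumes "0 \<le> t" "t \<le> (1/2)^k"
  shows "k * t \<le> takagi t" "takagi t \<le> k * t + (1/2)^k"
proof -
  have "2^k * t \<le> (2::real)^k * (1/2)^k"
    using assms(2) by (intro mult_left_mono) auto
  then have unit: "0 \<le> 2^k * t" "2^k * t \<le> 1"
    using assms by (simp_all add: power_one_over)
  show "k * t \<le> takagi t"
    using takagi_near_0[OF assms] takagi_nonneg[OF unit] by simp
  have "takagi (2^k * t) / 2^k \<le> 1 / 2^k"
    using takagi_le_1[OF unit] by (simp add: divide_right_mono)
  then show "takagi t \<le> k * t + (1/2)^k"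
    using takagi_near_0[OF assms] by (simp add: power_one_over)
qed

section \<open>Binary expansions\<close>

locale binary_expansion =
  fixes x :: real and a :: "nat \<Rightarrow> nat"
  assumes x_pos: "0 < x" and x_less_1: "x < 1" and not_dyadic: "\<not> dyadic x"
    and a_1_pos: "a 1 \<ge> 1" and a_mono: "\<And>n. n \<ge> 1 \<Longrightarrow> a n < a (Suc n)"
    and a_sums: "(\<lambda>n. (1/2) ^ a (Suc n)) sums x"
begin

text \<open>Position of the \<open>n\<close>-th binary digit 1 of \<open>x\<close>; the value \<open>a 0\<close> plays no role and is
  replaced by 0.\<close>

definition one_pos :: "nat \<Rightarrow> nat" where
  "one_pos n = (if n = 0 then 0 else a n)"

definition partial_sum :: "nat \<Rightarrow> real" where
  "partial_sum n = (\<Sum>i<n. (1/2) ^ a (Suc i))"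

lemma one_pos_Suc: "one_pos (Suc n) = a (Suc n)"
  by (simp add: one_pos_def)

lemma one_pos_0 [simp]: "one_pos 0 = 0"
  by (simp add: one_pos_def)

lemma one_pos_less_Suc: "one_pos n < one_pos (Suc n)"
  using a_1_pos a_mono[of n] by (cases n) (auto simp: one_pos_def)

lemma strict_mono_one_pos: "strict_mono one_pos"
  by (rule strict_monoI_Suc) (rule one_pos_less_Suc)

lemma one_pos_add: "one_pos n + i \<le> one_pos (n + i)"
proof (induction i)
  case (Suc i)
  then show ?case using one_pos_less_Suc[of "n + i"] by simp
qed simp

lemma one_pos_ge: "n \<le> one_pos n"
  using one_pos_add[of 0 n] by simp

lemma partial_sum_Suc: "partial_sum (Suc n) = partial_sum n + (1/2) ^ one_pos (Suc n)"
  by (simp add: partial_sum_def one_pos_Suc)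

lemma partial_sum_mono: "i \<le> j \<Longrightarrow> partial_sum i \<le> partial_sum j"
proof (induction j rule: dec_induct)
  case (step n)
  then show ?case using partial_sum_Suc[of n] by (simp add: add_increasing2)
qed simp

lemma partial_sum_nonneg: "0 \<le> partial_sum n"
  using partial_sum_mono[of 0 n] by (simp add: partial_sum_def)

lemma tail_sums: "(\<lambda>i. (1/2::real) ^ a (Suc (i + n))) sums (x - partial_sum n)"
  using sums_split_initial_segment[OF a_sums, of n] by (simp add: partial_sum_def)

lemma tail_ge: "(1/2) ^ one_pos (Suc n) \<le> x - partial_sum n"
proof -
  have "(\<Sum>i<1. (1/2::real) ^ a (Suc (i + n))) \<le> (\<Sum>i. (1/2::real) ^ a (Suc (i + n)))"
    by (rule sum_le_suminf) (use tail_sums in \<open>auto simp: sums_iff\<close>)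
  then show ?thesis using tail_sums by (simp add: sums_iff one_pos_Suc)
qed

lemma partial_sum_less: "partial_sum n < x"
  using tail_ge[of n] by (smt (verit) zero_less_power zero_less_divide_1_iff)

lemma tail_le: "x - partial_sum n \<le> 2 * (1/2) ^ one_pos (Suc n)"
proof -
  have geom: "(\<lambda>i. (1/2::real) ^ one_pos (Suc n) * (1/2)^i) sums ((1/2) ^ one_pos (Suc n) * 2)"
    using sums_mult[OF geometric_sums[of "1/2::real"]] by simp
  have "(1/2::real) ^ a (Suc (i + n)) \<le> (1/2) ^ one_pos (Suc n) * (1/2)^i" for i
  proof -
    have "one_pos (Suc n) + i \<le> a (Suc (i + n))"
      using one_pos_add[of "Suc n" i] by (simp add: one_pos_Suc add.commute)
    then have "(1/2::real) ^ a (Suc (i + n)) \<le> (1/2) ^ (one_pos (Suc n) + i)"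
      by (rule power_decreasing) auto
    then show ?thesis by (simp add: power_add)
  qed
  from sums_le[OF this tail_sums geom] show ?thesis by simp
qed

lemma partial_sum_dyadic: "one_pos n \<le> j \<Longrightarrow> \<exists>N::nat. partial_sum n = real N / 2^j"
proof (induction n)
  case 0
  show ?case by (auto simp: partial_sum_def intro!: exI[of _ 0])
next
  case (Suc n)
  obtain N where N: "partial_sum n = real N / 2^j"
    using Suc one_pos_less_Suc[of n] by force
  have "(1/2::real) ^ one_pos (Suc n) = 2^(j - one_pos (Suc n)) / 2^j"
    using Suc.prems by (simp add: power_one_over power_diff)
  then have "partial_sum (Suc n) = real (N + 2^(j - one_pos (Suc n))) / 2^j"
    using N by (simp add: partial_sum_Suc add_divide_distrib)
  then show ?case by blast
qed

lemma tail_less: "x - partial_sum n < 2 * (1/2) ^ one_pos (Suc n)"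
proof (rule ccontr)
  assume "\<not> ?thesis"
  then have x: "x = partial_sum n + 2 * (1/2) ^ one_pos (Suc n)"
    using tail_le[of n] by simp
  obtain N where N: "partial_sum n = real N / 2 ^ one_pos (Suc n)"
    using partial_sum_dyadic[of n "one_pos (Suc n)"] one_pos_less_Suc[of n] by force
  have "x = real (N + 2) / 2 ^ one_pos (Suc n)"
    unfolding x N by (simp add: power_one_over add_divide_distrib)
  then have "dyadic x" unfolding dyadic_def by (metis of_int_of_nat_eq)
  then show False using not_dyadic by simp
qed

lemma x_minus_partial_sum_less: "x - partial_sum m < (1/2)^m"
proof -
  have "(1/2::real) ^ one_pos (Suc m) \<le> (1/2) ^ Suc m"
    using one_pos_ge[of "Suc m"] by (intro power_decreasing) auto
  then show ?thesis using tail_less[of m] by simp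
qed

definition dyadic_index :: "nat \<Rightarrow> nat" where
  "dyadic_index j = nat \<lfloor>2^j * x\<rfloor>"

definition slope :: "nat \<Rightarrow> real" where
  "slope j = dyadic_slope j (dyadic_index j)"

lemma dyadic_index_bounds:
  shows "real (dyadic_index j) < 2^j * x" "2^j * x < real (dyadic_index j) + 1"
    and "dyadic_index j < 2^j"
proof -
  have index: "real (dyadic_index j) = of_int \<lfloor>2^j * x\<rfloor>"
    unfolding dyadic_index_def using x_pos by simp
  then show "2^j * x < real (dyadic_index j) + 1" by linarith
  show below: "real (dyadic_index j) < 2^j * x"
  proof (rule ccontr)
    assume "\<not> ?thesis"
    then have "2^j * x = of_int \<lfloor>2^j * x\<rfloor>" using index by linarith
    then have "x = of_int \<lfloor>2^j * x\<rfloor> / 2^j" by (simp add: field_simps)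
    then have "dyadic x" unfolding dyadic_def by blast
    then show False using not_dyadic by simp
  qed
  have "2^j * x < (2::real)^j" using x_less_1 by simp
  then have "real (dyadic_index j) < 2^j" using below by linarith
  then show "dyadic_index j < 2^j" by (metis of_nat_less_iff of_nat_numeral of_nat_power)
qed

lemma dyadic_index_Suc:
  "dyadic_index (Suc j) = 2 * dyadic_index j \<or> dyadic_index (Suc j) = 2 * dyadic_index j + 1"
proof -
  have "real (dyadic_index (Suc j)) < real (2 * dyadic_index j + 2)"
    "real (2 * dyadic_index j) < real (dyadic_index (Suc j) + 1)"
    using dyadic_index_bounds[of "Suc j"] dyadic_index_bounds[of j] by (simp_all add: mult.assoc)
  then have "dyadic_index (Suc j) < 2 * dyadic_index j + 2"
    "2 * dyadic_index j < dyadic_index (Suc j) + 1"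
    by (simp_all only: of_nat_less_iff)
  then show ?thesis by linarith
qed

lemma slope_Suc:
  "dyadic_index (Suc j) = 2 * dyadic_index j \<Longrightarrow> slope (Suc j) = slope j + 1"
  "dyadic_index (Suc j) = 2 * dyadic_index j + 1 \<Longrightarrow> slope (Suc j) = slope j - 1"
  unfolding slope_def using dyadic_slope_children[OF dyadic_index_bounds(3)[of j]] by simp_all

lemma dyadic_index_eq_partial_sum:
  assumes "one_pos n \<le> j" "j < one_pos (Suc n)"
  shows "real (dyadic_index j) = 2^j * partial_sum n"
proof -
  obtain N where N: "partial_sum n = real N / 2^j"
    using partial_sum_dyadic assms(1) by blast
  have "(1/2::real) ^ one_pos (Suc n) \<le> (1/2) ^ Suc j"
    using assms(2) by (intro power_decreasing) auto
  then have "partial_sum n < x" "x < partial_sum n + (1/2)^j"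
    using partial_sum_less[of n] tail_less[of n] by simp_all
  then have "real N < 2^j * x" "2^j * x < real N + 1"
    using N by (simp_all add: field_simps)
  then have "\<lfloor>2^j * x\<rfloor> = int N" by (simp add: floor_eq_iff)
  then have "dyadic_index j = N" unfolding dyadic_index_def by simp
  then show ?thesis using N by simp
qed

lemma exists_one_pos_bracket: "\<exists>n. one_pos n \<le> j \<and> j < one_pos (Suc n)"
proof (induction j)
  case 0
  show ?case using one_pos_less_Suc[of 0] by (auto intro!: exI[of _ 0])
next
  case (Suc j)
  then obtain n where n: "one_pos n \<le> j" "j < one_pos (Suc n)" by blast
  show ?case
  proof (cases "Suc j < one_pos (Suc n)")
    case True
    then show ?thesis using n by (intro exI[of _ n]) auto
  next
    case False
    then show ?thesis using n one_pos_less_Suc[of "Suc n"] by (intro exI[of _ "Suc n"]) auto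
  qed
qed

lemma slope_eq: "one_pos n \<le> j \<Longrightarrow> j < one_pos (Suc n) \<Longrightarrow> slope j = real j - 2 * real n"
proof (induction j arbitrary: n)
  case 0
  then have "n = 0" using one_pos_ge[of n] by simp
  moreover have "dyadic_index 0 = 0"
    using x_pos x_less_1 unfolding dyadic_index_def by (simp add: floor_eq_iff)
  ultimately show ?case by (simp add: slope_def dyadic_slope_def)
next
  case (Suc j)
  show ?case
  proof (cases "one_pos n \<le> j")
    case True
    have "real (dyadic_index (Suc j)) = real (2 * dyadic_index j)"
      using dyadic_index_eq_partial_sum[OF True] dyadic_index_eq_partial_sum[OF Suc.prems] Suc.prems
      by simp
    then have "dyadic_index (Suc j) = 2 * dyadic_index j" by (simp only: of_nat_eq_iff)
    then show ?thesis using slope_Suc(1) Suc.IH[OF True] Suc.prems by simp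
  next
    case False
    then have n: "one_pos n = Suc j" using Suc.prems by simp
    then obtain n' where n': "n = Suc n'" by (cases n) auto
    have j: "one_pos n' \<le> j" "j < one_pos (Suc n')"
      using one_pos_less_Suc[of n'] n n' by auto
    have "real (dyadic_index (Suc j)) = 2^Suc j * partial_sum n"
      using dyadic_index_eq_partial_sum[of n "Suc j"] Suc.prems by simp
    also have "\<dots> = 2 * (2^j * partial_sum n') + 1"
      using n n' by (simp add: partial_sum_Suc ring_distribs power_one_over)
    also have "2^j * partial_sum n' = real (dyadic_index j)"
      using dyadic_index_eq_partial_sum[OF j] by simp
    finally have "dyadic_index (Suc j) = 2 * dyadic_index j + 1" by linarith
    then show ?thesis using slope_Suc(2) Suc.IH[OF j] n' by simp
  qed
qed

lemma slope_at_top_iff: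
  "filterlim slope at_top sequentially
     \<longleftrightarrow> filterlim (\<lambda>n. real (a n) - 2 * real n) at_top sequentially"
proof
  assume lim: "filterlim slope at_top sequentially"
  show "filterlim (\<lambda>n. real (a n) - 2 * real n) at_top sequentially"
    unfolding filterlim_at_top eventually_sequentially
  proof
    fix Z
    obtain N where N: "\<And>j. j \<ge> N \<Longrightarrow> Z \<le> slope j"
      using lim unfolding filterlim_at_top eventually_sequentially by blast
    show "\<exists>M. \<forall>n\<ge>M. Z \<le> real (a n) - 2 * real n"
    proof (intro exI[of _ "Suc N"] allI impI)
      fix n assume n: "Suc N \<le> n"
      then have "one_pos n = a n" by (simp add: one_pos_def)
      moreover have "slope (one_pos n) = real (one_pos n) - 2 * real n"
        using slope_eq one_pos_less_Suc[of n] by simp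
      moreover have "N \<le> one_pos n" using one_pos_ge[of n] n by simp
      ultimately show "Z \<le> real (a n) - 2 * real n" using N[of "one_pos n"] by simp
    qed
  qed
next
  assume lim: "filterlim (\<lambda>n. real (a n) - 2 * real n) at_top sequentially"
  show "filterlim slope at_top sequentially"
    unfolding filterlim_at_top eventually_sequentially
  proof
    fix Z
    obtain N where N: "\<And>n. n \<ge> N \<Longrightarrow> Z \<le> real (a n) - 2 * real n"
      using lim unfolding filterlim_at_top eventually_sequentially by blast
    show "\<exists>M. \<forall>j\<ge>M. Z \<le> slope j"
    proof (intro exI[of _ "one_pos (Suc N)"] allI impI)
      fix j assume j: "one_pos (Suc N) \<le> j"
      obtain n where n: "one_pos n \<le> j" "j < one_pos (Suc n)"
        using exists_one_pos_bracket by blast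
      then have "Suc N \<le> n"
        using j strict_mono_less[OF strict_mono_one_pos, of "Suc N" "Suc n"] by simp
      then show "Z \<le> slope j"
        using slope_eq[OF n] N[of n] n by (simp add: one_pos_def)
    qed
  qed
qed

end

section \<open>The right derivative\<close>

context binary_expansion
begin

definition left_end :: "nat \<Rightarrow> real" where
  "left_end j = real (dyadic_index j) / 2^j"

definition right_end :: "nat \<Rightarrow> real" where
  "right_end j = (real (dyadic_index j) + 1) / 2^j"

lemma left_end_less: "left_end j < x"
  using dyadic_index_bounds(1)[of j] by (simp add: left_end_def field_simps)

lemma less_right_end: "x < right_end j"
  using dyadic_index_bounds(2)[of j] by (simp add: right_end_def field_simps)

lemma right_end_eq: "right_end j = left_end j + (1/2)^j"
  by (simp add: right_end_def left_end_def add_divide_distrib power_one_over)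

lemma right_end_minus_less: "right_end j - x < (1/2)^j"
  using left_end_less[of j] right_end_eq[of j] by simp

lemma right_end_Suc:
  "dyadic_index (Suc j) = 2 * dyadic_index j + 1 \<Longrightarrow> right_end (Suc j) = right_end j"
  "dyadic_index (Suc j) = 2 * dyadic_index j \<Longrightarrow> right_end (Suc j) < right_end j"
  by (simp_all add: right_end_def field_simps)

lemma right_end_Suc_le: "right_end (Suc j) \<le> right_end j"
  using right_end_Suc dyadic_index_Suc[of j] by force

lemma right_end_Suc_less_imp:
  "right_end (Suc j) < right_end j \<Longrightarrow> dyadic_index (Suc j) = 2 * dyadic_index j"
  using right_end_Suc(1) dyadic_index_Suc[of j] by force

lemma right_end_antimono: "i \<le> j \<Longrightarrow> right_end j \<le> right_end i"
  by (induction j rule: dec_induct) (use right_end_Suc_le order_trans in blast)+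

lemma takagi_x_expansion:
  "takagi x = takagi (left_end j) + slope j * (x - left_end j)
     + takagi (2^j * x - dyadic_index j) / 2^j"
  using takagi_dyadic_selfsimilar[OF dyadic_index_bounds(3), of j x]
    left_end_less[of j] less_right_end[of j]
  unfolding left_end_def right_end_def slope_def by simp

lemma takagi_right_end_minus:
  "takagi (right_end j) - takagi x
     = slope j * (right_end j - x) - takagi (2^j * x - dyadic_index j) / 2^j"
proof -
  have "takagi (right_end j) = takagi (left_end j) + slope j / 2^j"
    by (simp add: slope_def dyadic_slope_def right_end_def left_end_def)
  then show ?thesis
    using takagi_x_expansion[of j] right_end_eq[of j] by (simp add: algebra_simps power_one_over)
qed

lemma takagi_right_end_minus_le: "takagi (right_end j) - takagi x \<le> slope j * (right_end j - x)"
  using takagi_right_end_minus[of j] takagi_nonneg[of "2^j * x - dyadic_index j"]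
    dyadic_index_bounds[of j] by simp

lemma takagi_right_end_minus_ge:
  assumes "dyadic_index (Suc j) = 2 * dyadic_index j"
  shows "(slope j - 2) * (right_end j - x) \<le> takagi (right_end j) - takagi x"
proof -
  define v where "v = 2^j * x - dyadic_index j"
  have "2 * (2^j * x) < 2 * real (dyadic_index j) + 1"
    using dyadic_index_bounds(2)[of "Suc j"] assms by (simp add: mult.assoc)
  then have v: "0 < v" "v < 1/2"
    using dyadic_index_bounds(1)[of j] by (simp_all add: v_def)
  have "takagi v \<le> 2 * (1 - v)"
    using takagi_le_1[of v] v by simp
  then have "takagi v / 2^j \<le> 2 * ((1 - v) / 2^j)"
    by (simp add: divide_right_mono)
  also have "(1 - v) / 2^j = right_end j - x"
    by (simp add: v_def right_end_def field_simps)
  finally show ?thesis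
    using takagi_right_end_minus[of j] unfolding v_def by (simp add: algebra_simps)
qed

lemma takagi_minus_right_end_Suc_ge:
  assumes "dyadic_index (Suc j) = 2 * dyadic_index j" "right_end (Suc j) \<le> y" "y \<le> right_end j"
  shows "(slope j - 1) * (y - right_end (Suc j)) \<le> takagi y - takagi (right_end (Suc j))"
proof -
  define k where "k = 2 * dyadic_index j + 1"
  have k: "k < 2^Suc j" using dyadic_index_bounds(3)[of j] by (simp add: k_def)
  have ends: "real k / 2^Suc j = right_end (Suc j)" "(real k + 1) / 2^Suc j = right_end j"
    using assms(1) by (simp_all add: k_def right_end_def field_simps)
  have slope_k: "dyadic_slope (Suc j) k = slope j - 1"
    unfolding slope_def k_def using dyadic_slope_children(2)[OF dyadic_index_bounds(3)] .
  have "real k \<le> 2^Suc j * y" "2^Suc j * y \<le> real k + 1"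
    using assms(2,3) unfolding ends[symmetric] by (simp_all add: field_simps)
  then have "0 \<le> takagi (2^Suc j * y - k)"
    by (intro takagi_nonneg) simp_all
  then show ?thesis
    using takagi_dyadic_selfsimilar[OF k, of y] assms(2,3) unfolding ends slope_k by simp
qed

lemma exists_right_end_below:
  assumes "x < y"
  shows "\<exists>i. right_end i < y"
proof -
  obtain i where "(1/2::real)^i < y - x"
    using real_arch_pow_inv[of "y - x" "1/2"] assms by auto
  then show ?thesis using right_end_minus_less[of i] by (intro exI[of _ i]) simp
qed

lemma exists_right_end_bracket:
  assumes "x < y" "y \<le> right_end J"
  shows "\<exists>j\<ge>J. right_end (Suc j) < y \<and> y \<le> right_end j"
proof -
  define j' where "j' = (LEAST i. right_end i < y)"
  have j': "right_end j' < y"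
    unfolding j'_def by (rule LeastI_ex[OF exists_right_end_below[OF assms(1)]])
  have "J < j'"
    using right_end_antimono[of j' J] j' assms(2) by (cases "J < j'") auto
  then obtain j where j: "j' = Suc j" "J \<le> j" by (cases j') auto
  have "\<not> right_end j < y"
    using not_less_Least[of j "\<lambda>i. right_end i < y"] j unfolding j'_def by simp
  then show ?thesis using j j' by auto
qed

text \<open>Split \<open>[x, y]\<close> at \<open>M = right_end (Suc j)\<close>: on \<open>[M, y]\<close> the level \<open>j + 1\<close> copy has slope
  \<open>slope j - 1\<close>, and \<open>M\<close> is the right end point of the dyadic interval of \<open>x\<close> at a last
  level \<open>j'\<close>, where the next binary digit of \<open>x\<close> is 0.\<close>

lemma takagi_increment_ge:
  assumes slope_ge: "\<And>j. j \<ge> J \<Longrightarrow> Z \<le> slope j - 2" and y: "x < y" "y \<le> right_end J"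
  shows "Z * (y - x) \<le> takagi y - takagi x"
proof -
  obtain j where j: "J \<le> j" "right_end (Suc j) < y" "y \<le> right_end j"
    using exists_right_end_bracket[OF y] by blast
  define M where "M = right_end (Suc j)"
  have digit_j: "dyadic_index (Suc j) = 2 * dyadic_index j"
    using right_end_Suc_less_imp j(2,3) by simp
  obtain j' where j': "Suc j \<le> j'" "right_end (Suc j') < M" "M \<le> right_end j'"
    using exists_right_end_bracket[of M "Suc j"] less_right_end unfolding M_def by blast
  have "right_end j' = M"
    using right_end_antimono[OF j'(1)] j'(3) unfolding M_def by simp
  moreover have digit_j': "dyadic_index (Suc j') = 2 * dyadic_index j'"
    using right_end_Suc_less_imp j'(2,3) by simp
  ultimately have "(slope j' - 2) * (M - x) \<le> takagi M - takagi x"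
    using takagi_right_end_minus_ge by metis
  moreover have "(slope j - 1) * (y - M) \<le> takagi y - takagi M"
    using takagi_minus_right_end_Suc_ge[OF digit_j] j unfolding M_def by simp
  moreover have "Z * (y - M) \<le> (slope j - 1) * (y - M)"
    using slope_ge[of j] j by (intro mult_right_mono) (simp_all add: M_def)
  moreover have "Z * (M - x) \<le> (slope j' - 2) * (M - x)"
    using slope_ge[of j'] j j' less_right_end[of "Suc j"]
    by (intro mult_right_mono) (simp_all add: M_def)
  ultimately show ?thesis by (simp add: algebra_simps)
qed

lemma right_derivative_at_top_iff:
  "filterlim (\<lambda>h. (takagi (x + h) - takagi x) / h) at_top (at_right 0)
     \<longleftrightarrow> filterlim slope at_top sequentially"
proof
  assume lim: "filterlim (\<lambda>h. (takagi (x + h) - takagi x) / h) at_top (at_right 0)"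
  show "filterlim slope at_top sequentially"
    unfolding filterlim_at_top eventually_sequentially
  proof
    fix Z
    obtain b where b: "b > 0" "\<And>h. 0 < h \<Longrightarrow> h < b \<Longrightarrow> Z < (takagi (x + h) - takagi x) / h"
      using lim unfolding filterlim_at_top_dense eventually_at_right_field by blast
    obtain J where J: "(1/2::real)^J < b"
      using real_arch_pow_inv[of b "1/2"] b(1) by auto
    show "\<exists>N. \<forall>j\<ge>N. Z \<le> slope j"
    proof (intro exI[of _ J] allI impI)
      fix j assume "J \<le> j"
      then have "(1/2::real)^j \<le> (1/2)^J" by (intro power_decreasing) auto
      then have h: "0 < right_end j - x" "right_end j - x < b"
        using less_right_end[of j] right_end_minus_less[of j] J by linarith+
      have "(takagi (right_end j) - takagi x) / (right_end j - x) \<le> slope j"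
        using takagi_right_end_minus_le[of j] h(1) by (simp add: pos_divide_le_eq)
      then show "Z \<le> slope j" using b(2)[OF h] by simp
    qed
  qed
next
  assume lim: "filterlim slope at_top sequentially"
  show "filterlim (\<lambda>h. (takagi (x + h) - takagi x) / h) at_top (at_right 0)"
    unfolding filterlim_at_top_dense eventually_at_right_field
  proof
    fix Z
    obtain J where J: "\<And>j. j \<ge> J \<Longrightarrow> Z + 3 \<le> slope j"
      using lim unfolding filterlim_at_top eventually_sequentially by blast
    show "\<exists>b>0. \<forall>h>0. h < b \<longrightarrow> Z < (takagi (x + h) - takagi x) / h"
    proof (intro exI[of _ "right_end J - x"] conjI allI impI)
      show "0 < right_end J - x" using less_right_end[of J] by simp
      fix h :: real assume h: "0 < h" "h < right_end J - x"
      have "(Z + 1) * h \<le> takagi (x + h) - takagi x"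
        using takagi_increment_ge[of J "Z + 1" "x + h"] J h by (simp add: add.commute)
      then show "Z < (takagi (x + h) - takagi x) / h"
        using h(1) by (simp add: pos_less_divide_eq algebra_simps)
    qed
  qed
qed

end

section \<open>The left derivative\<close>

text \<open>If \<open>\<alpha> < \<alpha> + d\<close> are consecutive positions of binary digits 1 of \<open>x\<close>, \<open>P\<close> is the
  partial sum of the expansion up to position \<open>\<alpha>\<close>, and \<open>P - 2^-\<alpha> \<le> y < P\<close>, then
  \<open>(takagi x - takagi y) / (x - y)\<close> is the slope at level \<open>\<alpha>\<close> plus \<open>gap_quotient u t\<close>, where
  \<open>u = 2^\<alpha> (x - P) \<in> [2^-d, 2^(1-d)]\<close> and \<open>t = 2^\<alpha> (P - y) \<in> (0, 1]\<close>.\<close>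

definition gap_quotient :: "real \<Rightarrow> real \<Rightarrow> real" where
  "gap_quotient u t = (2*t + takagi u - takagi t) / (u + t)"

lemma exists_half_power_bracket:
  assumes "0 < t" "t \<le> 1"
  shows "\<exists>k. (1/2::real)^Suc k < t \<and> t \<le> (1/2)^k"
proof -
  obtain n where n: "(1/2::real)^n < t"
    using real_arch_pow_inv[of t "1/2"] assms(1) by auto
  define k' where "k' = (LEAST k. (1/2::real)^k < t)"
  have k': "(1/2::real)^k' < t"
    unfolding k'_def by (rule LeastI[of _ n]) (rule n)
  then have "k' \<noteq> 0" by (cases k') (use assms in auto)
  then obtain k where k: "k' = Suc k" by (cases k') auto
  have "\<not> (1/2::real)^k < t"
    using not_less_Least[of k "\<lambda>k. (1/2::real)^k < t"] k unfolding k'_def by simp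
  then show ?thesis using k' k by (intro exI[of _ k]) auto
qed

lemma mult_half_power_le: "1 \<le> r \<Longrightarrow> real r * (1/2)^r \<le> 1/2"
proof (induction r rule: dec_induct)
  case (step r)
  then have "real (Suc r) * (1/2)^Suc r \<le> real r * (1/2)^r"
    by (simp add: field_simps)
  with step show ?case by linarith
qed simp

lemma takagi_bounds_at_scale:
  assumes "0 < u" "u \<le> 2 * (1/2)^d" "1 \<le> d"
  shows "(real d - 1) * u \<le> takagi u" "takagi u \<le> (real d + 1) * u + 2 * (1/2)^d - 2 * u"
proof -
  have "(1/2::real)^(d - 1) = 2 * (1/2)^d" using assms(3) by (cases d) auto
  then have "u \<le> (1/2)^(d - 1)" using assms(2) by simp
  then show "(real d - 1) * u \<le> takagi u" "takagi u \<le> (real d + 1) * u + 2 * (1/2)^d - 2 * u"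
    using takagi_near_0_bounds[of u "d - 1"] assms \<open>(1/2::real)^(d - 1) = 2 * (1/2)^d\<close>
    by (simp_all add: algebra_simps)
qed

lemma gap_quotient_ge:
  fixes d l :: nat and u t :: real
  assumes "1 \<le> d" and l: "2^l \<le> d" and u: "(1/2)^d \<le> u" "u \<le> 2 * (1/2)^d" and t: "0 < t" "t \<le> 1"
  shows "- (real d - real l) \<le> gap_quotient u t"
proof -
  have "l < d" using l less_le_trans[OF less_exp[of l]] by blast
  have "0 < u" using u(1) by (smt (verit) zero_less_power zero_less_divide_1_iff)
  obtain k where k: "(1/2::real)^Suc k < t" "t \<le> (1/2)^k"
    using exists_half_power_bracket[OF t] by blast
  have takagi_t: "takagi t \<le> k * t + 2 * t"
    using takagi_near_0_bounds(2)[OF _ k(2)] t k(1) by simp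
  have takagi_u: "(real d - 1) * u \<le> takagi u"
    using takagi_bounds_at_scale \<open>0 < u\<close> u(2) \<open>1 \<le> d\<close> by blast
  have "- (real d - real l) * (u + t) \<le> 2*t + takagi u - takagi t"
  proof (cases "k \<le> d - l")
    case True
    then have "real k * t \<le> (real d - real l) * t"
      using t \<open>l < d\<close> by (intro mult_right_mono) auto
    moreover have "0 \<le> (2 * real d - 1 - real l) * u" using \<open>0 < u\<close> \<open>l < d\<close> by simp
    ultimately show ?thesis using takagi_t takagi_u by (simp add: algebra_simps)
  next
    case False
    define r where "r = k - (d - l)"
    have "1 \<le> r" and k_eq: "real k = real d - real l + real r"
      using False \<open>l < d\<close> by (simp_all add: r_def)
    have "(1/2::real)^k = (1/2)^(d - l) * (1/2)^r"
      using False by (simp add: r_def flip: power_add)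
    also have "(1/2::real)^(d - l) = 2^l * (1/2)^d"
      using \<open>l < d\<close> by (simp add: power_diff power_one_over)
    finally have "t \<le> 2^l * (1/2)^d * (1/2)^r"
      using k(2) by simp
    also have "\<dots> \<le> real d * u * (1/2)^r"
      using l u(1) by (intro mult_right_mono mult_mono) auto
    finally have "real r * t \<le> real r * (real d * u * (1/2)^r)"
      by (intro mult_left_mono) auto
    also have "\<dots> = real d * u * (real r * (1/2)^r)"
      by (simp add: algebra_simps)
    also have "\<dots> \<le> real d * u * (1/2)"
      using mult_half_power_le[OF \<open>1 \<le> r\<close>] \<open>0 < u\<close> by (intro mult_left_mono) auto
    also have "\<dots> \<le> (2 * real d - 1 - real l) * u"
    proof -
      have "real d / 2 \<le> 2 * real d - 1 - real l" using \<open>l < d\<close> by linarith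
      then show ?thesis using \<open>0 < u\<close> by (simp add: mult_right_mono mult.commute)
    qed
    finally have "real r * t \<le> (2 * real d - 1 - real l) * u" .
    moreover have "takagi t \<le> (real d - real l) * t + real r * t + 2 * t"
      using takagi_t unfolding k_eq by (simp add: algebra_simps)
    ultimately show ?thesis using takagi_u by (simp add: algebra_simps)
  qed
  moreover have "0 < u + t" using \<open>0 < u\<close> t by simp
  ultimately show ?thesis by (simp add: gap_quotient_def pos_le_divide_eq)
qed

text \<open>The choice \<open>t = 2^-(d - l)\<close> with \<open>l = \<lfloor>log 2 d\<rfloor>\<close> balances \<open>takagi t = (d - l) t\<close> against
  \<open>takagi u \<approx> d u\<close>.\<close>

lemma gap_quotient_le:
  fixes d l :: nat and u :: real
  assumes "1 \<le> d" and l: "2^l \<le> d" "d < 2^Suc l" and u: "(1/2)^d \<le> u" "u \<le> 2 * (1/2)^d"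
  shows "gap_quotient u ((1/2)^(d - l)) \<le> - (real d - real l) + 14"
proof -
  define t :: real where "t = (1/2)^(d - l)"
  have "l < d" using l less_le_trans[OF less_exp[of l]] by blast
  have "0 < u" using u(1) by (smt (verit) zero_less_power zero_less_divide_1_iff)
  have "0 < t" by (simp add: t_def)
  have takagi_t: "takagi t = real (d - l) * t"
    using takagi_near_0[of t "d - l"] by (simp add: t_def power_one_over)
  have takagi_u: "takagi u \<le> (real d + 1) * u"
    using takagi_bounds_at_scale(2)[OF \<open>0 < u\<close> u(2) \<open>1 \<le> d\<close>] u(1) by simp
  have "d + 1 \<le> 2 * 2^l" using l(2) by simp
  then have "real (d + 1) \<le> real (2 * 2^l)"
    by (simp only: of_nat_le_iff)
  then have "real d + 1 \<le> 2 * 2^l"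
    by simp
  then have "(real d + 1) * (1/2)^d \<le> 2 * (2^l * (1/2::real)^d)"
    unfolding mult.assoc[symmetric] by (intro mult_right_mono) auto
  also have "2^l * (1/2::real)^d = t"
    unfolding t_def using \<open>l < d\<close> by (simp add: power_diff power_one_over)
  finally have "(real d + 1) * (1/2)^d \<le> 2 * t" .
  have "(real d + 1 + real (d - l) - 14) * u \<le> (2 * real d + 1) * u"
    using \<open>0 < u\<close> by (intro mult_right_mono) auto
  also have "\<dots> \<le> (2 * real d + 1) * (2 * (1/2)^d)"
    using u(2) by (intro mult_left_mono) auto
  also have "\<dots> \<le> 6 * ((real d + 1) * (1/2)^d)"
    by (simp add: algebra_simps)
  finally have "(real d + 1 + real (d - l) - 14) * u \<le> 12 * t"
    using \<open>(real d + 1) * (1/2)^d \<le> 2 * t\<close> by linarith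
  then have "2*t + takagi u - takagi t \<le> (- (real d - real l) + 14) * (u + t)"
    using takagi_u takagi_t \<open>l < d\<close> by (simp add: of_nat_diff algebra_simps)
  moreover have "0 < u + t" using \<open>0 < u\<close> \<open>0 < t\<close> by simp
  ultimately show ?thesis
    unfolding gap_quotient_def t_def[symmetric] by (simp add: pos_divide_le_eq)
qed

context binary_expansion
begin

definition left_rate :: "nat \<Rightarrow> real" where
  "left_rate n = real (a (Suc n)) - 2 * real (a n) + 2 * real n
     - log 2 (real (a (Suc n)) - real (a n))"

lemma slope_one_pos: "slope (one_pos n) = real (one_pos n) - 2 * real n"
  using slope_eq one_pos_less_Suc[of n] by simp

lemma dyadic_interval_below_partial_sum:
  fixes m :: nat
  defines "\<alpha> \<equiv> one_pos (Suc m)"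
  obtains k where "k < 2^\<alpha>" "real k / 2^\<alpha> = partial_sum m"
    "(real k + 1) / 2^\<alpha> = partial_sum (Suc m)"
    "dyadic_slope \<alpha> k = slope \<alpha> + 2"
proof -
  obtain \<beta> where \<beta>: "\<alpha> = Suc \<beta>"
    using one_pos_ge[of "Suc m"] unfolding \<alpha>_def by (cases "one_pos (Suc m)") auto
  have index_\<alpha>: "real (dyadic_index \<alpha>) = 2^\<alpha> * partial_sum (Suc m)"
    using dyadic_index_eq_partial_sum[of "Suc m" \<alpha>] one_pos_less_Suc[of "Suc m"]
    by (simp add: \<alpha>_def)
  have index_\<beta>: "real (dyadic_index \<beta>) = 2^\<beta> * partial_sum m"
    using dyadic_index_eq_partial_sum[of m \<beta>] one_pos_less_Suc[of m] \<beta> by (simp add: \<alpha>_def)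
  have step: "2^\<alpha> * (partial_sum (Suc m) - partial_sum m) = (1::real)"
    by (simp add: partial_sum_Suc \<alpha>_def power_one_over)
  have "real (dyadic_index \<alpha>) = real (2 * dyadic_index \<beta> + 1)"
    using index_\<alpha> index_\<beta> step \<beta> by (simp add: algebra_simps)
  then have digit: "dyadic_index (Suc \<beta>) = 2 * dyadic_index \<beta> + 1"
    using \<beta> by (simp only: of_nat_eq_iff)
  show thesis
  proof
    show "2 * dyadic_index \<beta> < 2^\<alpha>" using dyadic_index_bounds(3)[of \<beta>] \<beta> by simp
    show "real (2 * dyadic_index \<beta>) / 2^\<alpha> = partial_sum m"
      using index_\<beta> \<beta> by simp
    then show "(real (2 * dyadic_index \<beta>) + 1) / 2^\<alpha> = partial_sum (Suc m)"
      using step by (simp add: field_simps)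
    show "dyadic_slope \<alpha> (2 * dyadic_index \<beta>) = slope \<alpha> + 2"
      using dyadic_slope_children[OF dyadic_index_bounds(3)[of \<beta>]] slope_Suc(2)[OF digit] \<beta>
      unfolding slope_def by simp
  qed
qed

lemma left_quotient_eq:
  fixes m :: nat and y :: real
  defines "c \<equiv> (2::real) ^ one_pos (Suc m)"
  defines "u \<equiv> c * (x - partial_sum (Suc m))" and "t \<equiv> c * (partial_sum (Suc m) - y)"
  assumes y: "partial_sum m \<le> y" "y < partial_sum (Suc m)"
  shows "(takagi x - takagi y) / (x - y) = slope (one_pos (Suc m)) + gap_quotient u t"
    and "0 < t" "t \<le> 1"
proof -
  define \<alpha> where "\<alpha> = one_pos (Suc m)"
  obtain k where k: "k < 2^\<alpha>" "real k / 2^\<alpha> = partial_sum m"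
    "(real k + 1) / 2^\<alpha> = partial_sum (Suc m)"
    "dyadic_slope \<alpha> k = slope \<alpha> + 2"
    using dyadic_interval_below_partial_sum unfolding \<alpha>_def by blast
  have c: "(2::real)^\<alpha> = c" "0 < c" by (simp_all add: c_def \<alpha>_def)
  have step: "c * (partial_sum (Suc m) - partial_sum m) = 1"
    using k(2,3) c by (simp add: field_simps)
  show "0 < t" using y c by (simp add: t_def)
  have y_t: "c * y - real k = 1 - t"
    using k(2) step c by (simp add: t_def field_simps)
  have "real k = c * partial_sum m" "c * partial_sum m \<le> c * y"
    using k(2) y(1) c by (simp_all add: field_simps)
  then show "t \<le> 1"
    using y_t by linarith
  have "takagi (1 - t) = takagi t"
    using takagi_reflect[of t] \<open>0 < t\<close> \<open>t \<le> 1\<close> by simp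
  then have "takagi y = takagi (partial_sum m) + (slope \<alpha> + 2) * (y - partial_sum m) + takagi t / c"
    using takagi_dyadic_selfsimilar[OF k(1), of y] k y y_t unfolding c by simp
  then have "c * takagi y
      = c * takagi (partial_sum m) + (slope \<alpha> + 2) * (c * (y - partial_sum m)) + takagi t"
    using c by (simp add: distrib_left mult.left_commute)
  moreover have "c * (y - partial_sum m) = 1 - t"
    using y_t \<open>real k = c * partial_sum m\<close> by (simp add: right_diff_distrib)
  ultimately have takagi_y:
      "c * takagi y = c * takagi (partial_sum m) + (slope \<alpha> + 2) * (1 - t) + takagi t"
    by simp
  have takagi_P: "c * takagi (partial_sum (Suc m)) = c * takagi (partial_sum m) + (slope \<alpha> + 2)"
    using k c unfolding dyadic_slope_def by (simp add: field_simps)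
  have "left_end \<alpha> = partial_sum (Suc m)" "2^\<alpha> * x - real (dyadic_index \<alpha>) = u"
    using dyadic_index_eq_partial_sum[of "Suc m" \<alpha>] one_pos_less_Suc[of "Suc m"] c
    by (simp_all add: \<alpha>_def left_end_def u_def right_diff_distrib)
  then have "takagi x
      = takagi (partial_sum (Suc m)) + slope \<alpha> * (x - partial_sum (Suc m)) + takagi u / c"
    using takagi_x_expansion[of \<alpha>] c by simp
  then have takagi_x: "c * takagi x = c * takagi (partial_sum (Suc m)) + slope \<alpha> * u + takagi u"
    using c by (simp add: u_def distrib_left mult.left_commute)
  have quotient: "c * (takagi x - takagi y) = slope \<alpha> * (u + t) + (2*t + takagi u - takagi t)"
    using takagi_x takagi_P takagi_y by (simp add: algebra_simps)
  have "x - y = (u + t) / c" "0 < u + t"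
    using c partial_sum_less[of "Suc m"] \<open>0 < t\<close> by (simp_all add: u_def t_def field_simps)
  then have "(takagi x - takagi y) / (x - y) = c * (takagi x - takagi y) / (u + t)"
    using c by simp
  also have "\<dots> = slope \<alpha> + gap_quotient u t"
    unfolding quotient gap_quotient_def using \<open>0 < u + t\<close> by (simp add: add_divide_distrib)
  finally show "(takagi x - takagi y) / (x - y) = slope (one_pos (Suc m)) + gap_quotient u t"
    by (simp add: \<alpha>_def)
qed

lemma scaled_tail_bounds:
  fixes m :: nat
  defines "d \<equiv> one_pos (Suc (Suc m)) - one_pos (Suc m)"
  shows "(1/2)^d \<le> 2 ^ one_pos (Suc m) * (x - partial_sum (Suc m))"
    and "2 ^ one_pos (Suc m) * (x - partial_sum (Suc m)) \<le> 2 * (1/2)^d"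
proof -
  have "(2::real) ^ one_pos (Suc m) * (1/2) ^ one_pos (Suc (Suc m)) = (1/2)^d"
    unfolding d_def using one_pos_less_Suc[of "Suc m"] by (simp add: power_diff power_one_over)
  then show "(1/2)^d \<le> 2 ^ one_pos (Suc m) * (x - partial_sum (Suc m))"
    "2 ^ one_pos (Suc m) * (x - partial_sum (Suc m)) \<le> 2 * (1/2)^d"
    using mult_left_mono[OF tail_ge[of "Suc m"], of "2 ^ one_pos (Suc m)"]
      mult_left_mono[OF tail_le[of "Suc m"], of "2 ^ one_pos (Suc m)"]
    by (simp_all add: algebra_simps)
qed

lemma left_rate_Suc:
  fixes m :: nat
  defines "d \<equiv> one_pos (Suc (Suc m)) - one_pos (Suc m)"
  shows "left_rate (Suc m) = real d - real (one_pos (Suc m)) + 2 * real (Suc m) - log 2 (real d)"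
  using one_pos_less_Suc[of "Suc m"] by (simp add: left_rate_def d_def one_pos_Suc of_nat_diff)

lemma left_quotient_ge:
  assumes "partial_sum m \<le> y" "y < partial_sum (Suc m)"
  shows "- left_rate (Suc m) - 1 \<le> (takagi x - takagi y) / (x - y)"
proof -
  define d where "d = one_pos (Suc (Suc m)) - one_pos (Suc m)"
  have "1 \<le> d" using one_pos_less_Suc[of "Suc m"] by (simp add: d_def)
  then obtain l where l: "2^l \<le> d" "d < 2^(l + 1)"
    using ex_power_ivl1[of 2 d] by auto
  define c :: real where "c = 2 ^ one_pos (Suc m)"
  note quotient = left_quotient_eq[OF assms, folded c_def]
  have "- (real d - real l)
      \<le> gap_quotient (c * (x - partial_sum (Suc m))) (c * (partial_sum (Suc m) - y))"
    using gap_quotient_ge[OF \<open>1 \<le> d\<close> l(1) _ _ quotient(2,3)] scaled_tail_bounds[of m]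
    unfolding c_def d_def by blast
  moreover have "log 2 (real d) < real l + 1"
    using log2_of_power_less[of d "l + 1"] l(2) \<open>1 \<le> d\<close> by simp
  ultimately show ?thesis
    using quotient(1) slope_one_pos[of "Suc m"] left_rate_Suc[of m] unfolding d_def by linarith
qed

lemma exists_left_quotient_le:
  "\<exists>y. partial_sum m \<le> y \<and> y < partial_sum (Suc m) \<and>
     (takagi x - takagi y) / (x - y) \<le> - left_rate (Suc m) + 14"
proof -
  define d where "d = one_pos (Suc (Suc m)) - one_pos (Suc m)"
  have "1 \<le> d" using one_pos_less_Suc[of "Suc m"] by (simp add: d_def)
  then obtain l where l: "2^l \<le> d" "d < 2^Suc l"
    using ex_power_ivl1[of 2 d] by auto
  define c :: real where "c = 2 ^ one_pos (Suc m)"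
  have "0 < c" by (simp add: c_def)
  define t :: real where "t = (1/2)^(d - l)"
  define y where "y = partial_sum (Suc m) - t / c"
  have "c * (partial_sum (Suc m) - partial_sum m) = 1"
    by (simp add: c_def partial_sum_Suc power_one_over)
  moreover have "0 < t" "t \<le> 1" by (simp_all add: t_def power_le_one)
  ultimately have y: "partial_sum m \<le> y" "y < partial_sum (Suc m)"
    using \<open>0 < c\<close> by (simp_all add: y_def field_simps)
  have "c * (partial_sum (Suc m) - y) = t"
    using \<open>0 < c\<close> by (simp add: y_def)
  then have "(takagi x - takagi y) / (x - y)
      = slope (one_pos (Suc m)) + gap_quotient (c * (x - partial_sum (Suc m))) t"
    using left_quotient_eq(1)[OF y] by (simp add: c_def)
  moreover have "gap_quotient (c * (x - partial_sum (Suc m))) t \<le> - (real d - real l) + 14"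
    using gap_quotient_le[OF \<open>1 \<le> d\<close> l] scaled_tail_bounds[of m]
    unfolding c_def d_def t_def by blast
  moreover have "real l \<le> log 2 (real d)"
    using le_log2_of_power[OF l(1)] .
  ultimately have "(takagi x - takagi y) / (x - y) \<le> - left_rate (Suc m) + 14"
    using slope_one_pos[of "Suc m"] left_rate_Suc[of m] unfolding d_def by linarith
  then show ?thesis using y by blast
qed

lemma left_derivative_at_top_iff:
  "filterlim (\<lambda>h. (takagi (x + h) - takagi x) / h) at_top (at_left 0)
     \<longleftrightarrow> filterlim left_rate at_bot sequentially"
proof
  assume lim: "filterlim (\<lambda>h. (takagi (x + h) - takagi x) / h) at_top (at_left 0)"
  show "filterlim left_rate at_bot sequentially"
    unfolding filterlim_at_bot eventually_sequentially
  proof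
    fix W
    obtain b where b: "b < 0" "\<And>h. b < h \<Longrightarrow> h < 0 \<Longrightarrow> 14 - W < (takagi (x + h) - takagi x) / h"
      using lim unfolding filterlim_at_top_dense eventually_at_left_field by blast
    obtain J where J: "(1/2::real)^J < - b"
      using real_arch_pow_inv[of "- b" "1/2"] b(1) by auto
    show "\<exists>N. \<forall>n\<ge>N. left_rate n \<le> W"
    proof (intro exI[of _ "Suc J"] allI impI)
      fix n assume "Suc J \<le> n"
      then obtain m where m: "n = Suc m" "J \<le> m" by (cases n) auto
      obtain y where y: "partial_sum m \<le> y" "y < partial_sum (Suc m)"
        "(takagi x - takagi y) / (x - y) \<le> - left_rate (Suc m) + 14"
        using exists_left_quotient_le[of m] by blast
      have "(1/2::real)^m \<le> (1/2)^J" using m by (intro power_decreasing) auto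
      then have "b < y - x" "y - x < 0"
        using x_minus_partial_sum_less[of m] y(1,2) partial_sum_less[of "Suc m"] J by linarith+
      then have "14 - W < (takagi y - takagi x) / (y - x)"
        using b(2)[of "y - x"] by simp
      also have "(takagi y - takagi x) / (y - x) = (takagi x - takagi y) / (x - y)"
        by (metis minus_diff_eq minus_divide_divide)
      finally show "left_rate n \<le> W" using y(3) m by simp
    qed
  qed
next
  assume lim: "filterlim left_rate at_bot sequentially"
  show "filterlim (\<lambda>h. (takagi (x + h) - takagi x) / h) at_top (at_left 0)"
    unfolding filterlim_at_top_dense eventually_at_left_field
  proof
    fix Z
    obtain N where N: "\<And>n. n \<ge> N \<Longrightarrow> left_rate n \<le> - (Z + 2)"
      using lim unfolding filterlim_at_bot eventually_sequentially by blast
    show "\<exists>b<0. \<forall>h>b. h < 0 \<longrightarrow> Z < (takagi (x + h) - takagi x) / h"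
    proof (intro exI[of _ "partial_sum N - x"] conjI allI impI)
      show "partial_sum N - x < 0" using partial_sum_less[of N] by simp
      fix h :: real assume h: "partial_sum N - x < h" "h < 0"
      define y where "y = x + h"
      have y: "y < x" "partial_sum N < y" using h by (simp_all add: y_def)
      have "\<exists>i. y < partial_sum (Suc i)"
      proof -
        obtain i where "(1/2::real)^i < x - y"
          using real_arch_pow_inv[of "x - y" "1/2"] y(1) by auto
        moreover have "(1/2::real) ^ Suc i \<le> (1/2)^i"
          by (intro power_decreasing) auto
        ultimately show ?thesis
          using x_minus_partial_sum_less[of "Suc i"] by (intro exI[of _ i]) linarith
      qed
      define m where "m = (LEAST i. y < partial_sum (Suc i))"
      have m: "y < partial_sum (Suc m)"
        unfolding m_def by (rule LeastI_ex) fact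
      have "partial_sum m \<le> y"
      proof (cases m)
        case 0
        then show ?thesis using y partial_sum_nonneg[of N] by (simp add: partial_sum_def)
      next
        case (Suc m')
        then show ?thesis
          using not_less_Least[of m' "\<lambda>i. y < partial_sum (Suc i)"] unfolding m_def by simp
      qed
      moreover have "N \<le> Suc m"
        using partial_sum_mono[of "Suc m" N] m y(2) by (cases "N \<le> Suc m") auto
      ultimately have "Z < (takagi x - takagi y) / (x - y)"
        using left_quotient_ge[of m y] m N[of "Suc m"] by linarith
      also have "(takagi x - takagi y) / (x - y) = (takagi (x + h) - takagi x) / h"
        unfolding y_def by (metis add_diff_cancel_left' minus_diff_eq minus_divide_divide)
      finally show "Z < (takagi (x + h) - takagi x) / h" .
    qed
  qed
qed

end

section \<open>Reflection\<close>

lemma not_dyadic_one_minus: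
  assumes "\<not> dyadic x"
  shows "\<not> dyadic (1 - x)"
proof
  assume "dyadic (1 - x)"
  then obtain k :: int and m :: nat where "1 - x = of_int k / 2^m"
    unfolding dyadic_def by blast
  then have "x = of_int (2^m - k) / 2^m"
    by (simp add: diff_divide_distrib)
  then show False using assms unfolding dyadic_def by blast
qed

lemma eventually_takagi_quotient_reflect:
  assumes "0 < x" "x < 1"
  shows "\<forall>\<^sub>F h in at 0. (takagi ((1 - x) + (- h)) - takagi (1 - x)) / (- h)
                         = - ((takagi (x + h) - takagi x) / h)"
  unfolding eventually_at
proof (intro exI[of _ "min x (1 - x)"] conjI ballI impI)
  show "0 < min x (1 - x)" using assms by simp
  fix h :: real assume "h \<noteq> 0 \<and> dist h 0 < min x (1 - x)"
  then have "0 \<le> x + h" "x + h \<le> 1" by (auto simp: dist_real_def)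
  then have "takagi ((1 - x) + (- h)) = takagi (x + h)"
    using takagi_reflect[of "x + h"] by (simp add: algebra_simps)
  moreover have "takagi (1 - x) = takagi x"
    using takagi_reflect[of x] assms by simp
  ultimately show "(takagi ((1 - x) + (- h)) - takagi (1 - x)) / (- h)
      = - ((takagi (x + h) - takagi x) / h)"
    by simp
qed

lemma filterlim_at_bot_at_right_reflect:
  fixes f g :: "real \<Rightarrow> real"
  assumes "\<forall>\<^sub>F h in at_right 0. g (- h) = - f h"
  shows "filterlim f at_bot (at_right 0) \<longleftrightarrow> filterlim g at_top (at_left 0)"
proof -
  have "filterlim g at_top (at_left 0) \<longleftrightarrow> filterlim (\<lambda>h. g (- h)) at_top (at_right 0)"
    using at_left_minus[of "0::real"] by (simp add: filterlim_filtermap)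
  also have "\<dots> \<longleftrightarrow> filterlim (\<lambda>h. - f h) at_top (at_right 0)"
    by (rule filterlim_cong[OF refl refl assms])
  finally show ?thesis by (simp add: filterlim_uminus_at_bot)
qed

lemma filterlim_at_bot_at_left_reflect:
  fixes f g :: "real \<Rightarrow> real"
  assumes "\<forall>\<^sub>F h in at_left 0. g (- h) = - f h"
  shows "filterlim f at_bot (at_left 0) \<longleftrightarrow> filterlim g at_top (at_right 0)"
proof -
  have "filterlim g at_top (at_right 0) \<longleftrightarrow> filterlim (\<lambda>h. g (- h)) at_top (at_left 0)"
    using at_right_minus[of "0::real"] by (simp add: filterlim_filtermap)
  also have "\<dots> \<longleftrightarrow> filterlim (\<lambda>h. - f h) at_top (at_left 0)"
    by (rule filterlim_cong[OF refl refl assms])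
  finally show ?thesis by (simp add: filterlim_uminus_at_bot)
qed

theorem theorem1:
  fixes x :: real and a b :: "nat \<Rightarrow> nat"
  assumes x01: "0 < x" "x < 1"
    and nondyadic: "\<not> dyadic x"
    and a_pos: "a 1 \<ge> 1"
    and a_mono: "\<And>n. n \<ge> 1 \<Longrightarrow> a n < a (Suc n)"
    and a_sum: "(\<lambda>n. (1/2) ^ a (Suc n)) sums x"
    and b_pos: "b 1 \<ge> 1"
    and b_mono: "\<And>n. n \<ge> 1 \<Longrightarrow> b n < b (Suc n)"
    and b_sum: "(\<lambda>n. (1/2) ^ b (Suc n)) sums (1 - x)"
  shows
    "(filterlim (\<lambda>h. (takagi (x + h) - takagi x) / h) at_top (at_right 0)
        \<longleftrightarrow> filterlim (\<lambda>n. real (a n) - 2 * real n) at_top sequentially)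
   \<and> (filterlim (\<lambda>h. (takagi (x + h) - takagi x) / h) at_top (at_left 0)
        \<longleftrightarrow> filterlim (\<lambda>n. real (a (Suc n)) - 2 * real (a n) + 2 * real n
                 - log 2 (real (a (Suc n)) - real (a n))) at_bot sequentially)
   \<and> (filterlim (\<lambda>h. (takagi (x + h) - takagi x) / h) at_bot (at_right 0)
        \<longleftrightarrow> filterlim (\<lambda>n. real (b (Suc n)) - 2 * real (b n) + 2 * real n
                 - log 2 (real (b (Suc n)) - real (b n))) at_bot sequentially)
   \<and> (filterlim (\<lambda>h. (takagi (x + h) - takagi x) / h) at_bot (at_left 0)
        \<longleftrightarrow> filterlim (\<lambda>n. real (b n) - 2 * real n) at_top sequentially)"
proof -
  interpret xa: binary_expansion x a
    using x01 nondyadic a_pos a_mono a_sum by unfold_locales auto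
  interpret xb: binary_expansion "1 - x" b
    using x01 not_dyadic_one_minus[OF nondyadic] b_pos b_mono b_sum by unfold_locales auto
  note reflect = eventually_takagi_quotient_reflect[OF x01, unfolded eventually_at_split]
  have xa_rate: "xa.left_rate = (\<lambda>n. real (a (Suc n)) - 2 * real (a n) + 2 * real n
                 - log 2 (real (a (Suc n)) - real (a n)))"
    by (simp add: fun_eq_iff xa.left_rate_def)
  have xb_rate: "xb.left_rate = (\<lambda>n. real (b (Suc n)) - 2 * real (b n) + 2 * real n
                 - log 2 (real (b (Suc n)) - real (b n)))"
    by (simp add: fun_eq_iff xb.left_rate_def)
  show ?thesis
    unfolding xa.right_derivative_at_top_iff xa.slope_at_top_iff
      xa.left_derivative_at_top_iff xa_rate
      filterlim_at_bot_at_right_reflect[OF conjunct2[OF reflect]]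
      xb.left_derivative_at_top_iff xb_rate
      filterlim_at_bot_at_left_reflect[OF conjunct1[OF reflect]]
      xb.right_derivative_at_top_iff xb.slope_at_top_iff
    by simp
qed

end
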